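(* For every complex number $a$ of modulus one, there is no $6\times 6$ complex Hadamard matrix all of whose entries lie in $\{1,a,-\bar a\}$.
   Context: A complex Hadamard matrix (CHM) of order $n$ is an $n\times n$ complex matrix $H$ all of whose entries have modulus one and which satisfies $HH^\dagger=nI$. *)

theory Defs
  imports "HOL-Analysis.Analysis"
begin

text \<open>An n x n complex matrix is represented as H :: nat => nat => complex, with
  entries H i j for i, j < n (entries outside the range are irrelevant).\<close>

definition complex_hadamard :: "nat \<Rightarrow> (nat \<Rightarrow> nat \<Rightarrow> complex) \<Rightarrow> bool" where
  "complex_hadamard n H \<longleftrightarrow>
     (\<forall>i<n. \<forall>j<n. cmod (H i j) = 1) \<and>
     (\<forall>i<n. \<forall>j<n. (\<Sum>k<n. H i k * cnj (H j k)) = (if i = j then of_nat n else 0))"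

end

theory Submission
  imports Defs "HOL-Computational_Algebra.Primes"
begin

text \<open>Write c = Re a and encode the entries 1, a, -cnj a by the symbols 0, 1, 2. Orthogonality of two
  distinct rows becomes two linear relations among the nine counts of symbol pairs in those rows, with
  coefficients 1, c, 1 - 2c^2 (real part) and 1, 2c (imaginary part, usable when Im a \<noteq> 0).
  For a weight w on pairs of symbols, the sum of w over all pairs of rows and all columns can be
  computed row pair by row pair or column by column: for a suitable w the row relations make it
  small while every column of six symbols makes it large. For |c| < 2/3 the real parts themselves
  are such a weight. For 2/3 \<le> c < 1, either c is the irrational root of 4c^2 = 3 or of
  2c^2 + c = 2, and the real relation splits into rational identities among the counts, or the two
  relations allow at most one coinciding position in any two rows. The case c \<le> -2/3 reduces to
  this by exchanging a and -cnj a, and a = \<plusminus>1 would give a real Hadamard matrix of order 6, whose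
  order would have to be divisible by 4.\<close>

lemma sum_lessThan_3: "(\<Sum>x<3. f x) = f 0 + f 1 + f (2::nat)"
  by (simp add: eval_nat_numeral)

lemma nat_sum_eq_6_cases:
  assumes "(t::nat) + p + q = 6"
  shows "(t = 0 \<or> t = 1 \<or> t = 2 \<or> t = 3 \<or> t = 4 \<or> t = 5 \<or> t = 6)
       \<and> (p = 0 \<or> p = 1 \<or> p = 2 \<or> p = 3 \<or> p = 4 \<or> p = 5 \<or> p = 6) \<and> q = 6 - t - p"
  using assms by auto

lemma sum_by_fibres:
  assumes "finite A" "finite T" "f ` A \<subseteq> T"
  shows "(\<Sum>a\<in>A. g (f a)) = (\<Sum>t\<in>T. of_nat (card {a\<in>A. f a = t}) * g t)"
proof -
  have "(\<Sum>a\<in>A. g (f a)) = (\<Sum>t\<in>T. \<Sum>a\<in>{a\<in>A. f a = t}. g (f a))"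
    using sum.group[OF assms, of "\<lambda>a. g (f a)"] by simp
  also have "\<dots> = (\<Sum>t\<in>T. of_nat (card {a\<in>A. f a = t}) * g t)"
    by (intro sum.cong refl) simp
  finally show ?thesis .
qed

lemma sum_if_eq_lessThan:
  fixes d e :: real
  assumes "i < n"
  shows "(\<Sum>j<n. if i = j then d else e) = d + (real n - 1) * e"
proof -
  have "(\<Sum>j<n. if i = j then d else e) = (\<Sum>j<n. e + (if i = j then d - e else 0))"
    by (intro sum.cong) auto
  also have "\<dots> = d + (real n - 1) * e"
    using assms by (simp add: sum.distrib algebra_simps)
  finally show ?thesis .
qed

lemma square_eq_prime_times_square:
  fixes x y :: int
  assumes "prime p" "x^2 = p * y^2"
  shows "y = 0"
  using assms(2)
proof (induction "nat \<bar>y\<bar>" arbitrary: x y rule: less_induct)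
  case less
  show ?case
  proof (rule ccontr)
    assume "y \<noteq> 0"
    have "p dvd x^2" using less.prems by simp
    then obtain x' where x: "x = p * x'" using assms(1) prime_dvd_power by (metis dvdE)
    have "y^2 = p * x'^2"
      using less.prems assms(1) unfolding x
      by (simp add: power2_eq_square prime_gt_0_int mult.left_commute)
    then have "p dvd y^2" by simp
    then obtain y' where y: "y = p * y'" using assms(1) prime_dvd_power by (metis dvdE)
    have "x'^2 = p * y'^2"
      using \<open>y^2 = p * x'^2\<close> assms(1) unfolding y
      by (simp add: power2_eq_square prime_gt_0_int mult.left_commute)
    moreover have "nat \<bar>y'\<bar> < nat \<bar>y\<bar>"
      using \<open>y \<noteq> 0\<close> assms(1) unfolding y by (auto simp: abs_mult prime_gt_1_int)
    ultimately have "y' = 0" using less.hyps by blast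
    then show False using \<open>y \<noteq> 0\<close> y by simp
  qed
qed

definition pair_count :: "nat \<Rightarrow> (nat \<Rightarrow> nat \<Rightarrow> nat) \<Rightarrow> nat \<Rightarrow> nat \<Rightarrow> nat \<Rightarrow> nat \<Rightarrow> nat" where
  "pair_count m X i j x y = card {k. k < m \<and> X i k = x \<and> X j k = y}"

definition column_count :: "nat \<Rightarrow> (nat \<Rightarrow> nat \<Rightarrow> nat) \<Rightarrow> nat \<Rightarrow> nat \<Rightarrow> nat" where
  "column_count n X k x = card {i. i < n \<and> X i k = x}"

lemma sum_pair_weight_by_counts:
  fixes w :: "nat \<Rightarrow> nat \<Rightarrow> 'a::comm_semiring_1"
  assumes "\<forall>k<m. X i k < s \<and> X j k < s"
  shows "(\<Sum>k<m. w (X i k) (X j k)) = (\<Sum>x<s. \<Sum>y<s. of_nat (pair_count m X i j x y) * w x y)"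
proof -
  have "(\<Sum>k<m. w (X i k) (X j k)) = (\<Sum>k<m. case_prod w (X i k, X j k))"
    by simp
  also have "\<dots> = (\<Sum>t\<in>{..<s} \<times> {..<s}. of_nat (card {k\<in>{..<m}. (X i k, X j k) = t}) * case_prod w t)"
    by (rule sum_by_fibres) (use assms in auto)
  also have "\<dots> = (\<Sum>x<s. \<Sum>y<s. of_nat (pair_count m X i j x y) * w x y)"
    unfolding sum.cartesian_product by (intro sum.cong refl) (auto simp: pair_count_def)
  finally show ?thesis .
qed

lemma sum_pair_counts:
  "\<forall>k<m. X i k < s \<and> X j k < s \<Longrightarrow> (\<Sum>x<s. \<Sum>y<s. pair_count m X i j x y) = m"
  using sum_pair_weight_by_counts[where w = "\<lambda>_ _. 1::nat"] by simp

lemma sum_column_weight_by_counts: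
  fixes w :: "nat \<Rightarrow> nat \<Rightarrow> 'a::comm_semiring_1"
  assumes "\<forall>i<n. X i k < s"
  shows "(\<Sum>i<n. \<Sum>j<n. w (X i k) (X j k))
       = (\<Sum>x<s. \<Sum>y<s. of_nat (column_count n X k x) * of_nat (column_count n X k y) * w x y)"
proof -
  have fibre: "{p\<in>{..<n} \<times> {..<n}. X (fst p) k = x \<and> X (snd p) k = y}
      = {i. i < n \<and> X i k = x} \<times> {j. j < n \<and> X j k = y}" for x y
    by auto
  have "(\<Sum>i<n. \<Sum>j<n. w (X i k) (X j k))
      = (\<Sum>p\<in>{..<n} \<times> {..<n}. case_prod w (X (fst p) k, X (snd p) k))"
    by (simp add: sum.cartesian_product split_def)
  also have "\<dots> = (\<Sum>t\<in>{..<s} \<times> {..<s}.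
      of_nat (card {p\<in>{..<n} \<times> {..<n}. (X (fst p) k, X (snd p) k) = t}) * case_prod w t)"
    by (rule sum_by_fibres) (use assms in auto)
  also have "\<dots> = (\<Sum>x<s. \<Sum>y<s. of_nat (column_count n X k x) * of_nat (column_count n X k y) * w x y)"
    unfolding sum.cartesian_product
    by (intro sum.cong refl) (auto simp: fibre card_cartesian_product column_count_def)
  finally show ?thesis .
qed

lemma sum_column_counts:
  assumes "\<forall>i<n. X i k < s"
  shows "(\<Sum>x<s. column_count n X k x) = n"
proof -
  have "(\<Sum>i<n. (1::nat)) = (\<Sum>x<s. column_count n X k x)"
    using sum_by_fibres[of "{..<n}" "{..<s}" "\<lambda>i. X i k" "\<lambda>_. 1::nat"] assms
    by (auto simp: column_count_def)
  then show ?thesis by simp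
qed

lemma weighted_double_counting:
  fixes X :: "nat \<Rightarrow> nat \<Rightarrow> nat" and w :: "nat \<Rightarrow> nat \<Rightarrow> real"
  assumes "0 < n" and symbols: "\<forall>i<n. \<forall>k<n. X i k < s"
    and diagonal: "\<forall>x<s. w x x = d"
    and off_diagonal: "\<forall>i<n. \<forall>j<n. i \<noteq> j \<longrightarrow>
      (\<Sum>x<s. \<Sum>y<s. real (pair_count n X i j x y) * w x y) \<le> e"
    and columns: "\<forall>k<n. real n * d + (real n - 1) * e <
      (\<Sum>x<s. \<Sum>y<s. real (column_count n X k x) * real (column_count n X k y) * w x y)"
  shows False
proof -
  have pairs: "(\<Sum>k<n. w (X i k) (X j k)) \<le> (if i = j then real n * d else e)"
    if "i < n" "j < n" for i j
  proof (cases "i = j")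
    case True
    then show ?thesis using that symbols diagonal by simp
  next
    case False
    moreover have "\<forall>k<n. X i k < s \<and> X j k < s" using that symbols by simp
    ultimately show ?thesis using that off_diagonal by (simp add: sum_pair_weight_by_counts)
  qed
  have columns': "real n * d + (real n - 1) * e < (\<Sum>i<n. \<Sum>j<n. w (X i k) (X j k))"
    if "k < n" for k
  proof -
    have "\<forall>i<n. X i k < s" using that symbols by simp
    then show ?thesis using that columns by (simp add: sum_column_weight_by_counts)
  qed
  have "(\<Sum>k<n. \<Sum>i<n. \<Sum>j<n. w (X i k) (X j k)) = (\<Sum>i<n. \<Sum>k<n. \<Sum>j<n. w (X i k) (X j k))"
    by (rule sum.swap)
  also have "\<dots> = (\<Sum>i<n. \<Sum>j<n. \<Sum>k<n. w (X i k) (X j k))"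
    by (rule sum.cong[OF refl], rule sum.swap)
  also have "\<dots> \<le> (\<Sum>i<n. \<Sum>j<n. if i = j then real n * d else e)"
    by (intro sum_mono) (simp add: pairs)
  also have "\<dots> = (\<Sum>k<n. real n * d + (real n - 1) * e)"
    by (intro sum.cong refl) (simp add: sum_if_eq_lessThan)
  also have "\<dots> < (\<Sum>k<n. \<Sum>i<n. \<Sum>j<n. w (X i k) (X j k))"
    using \<open>0 < n\<close> columns' by (intro sum_strict_mono) auto
  finally show False by simp
qed

definition entry_symbol :: "complex \<Rightarrow> complex \<Rightarrow> nat" where
  "entry_symbol a z = (if z = 1 then 0 else if z = a then 1 else 2)"

definition symbol_value :: "complex \<Rightarrow> nat \<Rightarrow> complex" where
  "symbol_value a x = (if x = 0 then 1 else if x = 1 then a else - cnj a)"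

definition re_weight :: "real \<Rightarrow> nat \<Rightarrow> nat \<Rightarrow> real" where
  "re_weight c x y =
     (if x = y then 1 else if x \<noteq> 0 \<and> y \<noteq> 0 then 1 - 2 * c^2 else if x + y = 1 then c else - c)"

definition im_weight :: "real \<Rightarrow> nat \<Rightarrow> nat \<Rightarrow> real" where
  "im_weight c x y =
     (if x = y then 0 else if y = 0 then 1 else if x = 0 then -1 else if x = 1 then - 2 * c else 2 * c)"

lemma entry_symbol_less_3: "entry_symbol a z < 3"
  by (simp add: entry_symbol_def)

lemma symbol_value_entry_symbol: "z \<in> {1, a, - cnj a} \<Longrightarrow> symbol_value a (entry_symbol a z) = z"
  by (auto simp: entry_symbol_def symbol_value_def)

lemma symbol_value_mult_cnj:
  assumes "cmod a = 1" "x < 3" "y < 3"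
  shows "symbol_value a x * cnj (symbol_value a y)
       = Complex (re_weight (Re a) x y) (Im a * im_weight (Re a) x y)"
proof -
  have "(Im a)^2 = 1 - (Re a)^2" using assms(1) by (simp add: cmod_def)
  moreover have "x \<in> {0, 1, 2}" "y \<in> {0, 1, 2}" using assms(2,3) by auto
  ultimately show ?thesis
    by (auto simp: symbol_value_def re_weight_def im_weight_def complex_eq_iff power2_eq_square algebra_simps)
qed

lemma hadamard_pair_count_relations:
  assumes "cmod a = 1" and H: "complex_hadamard n H"
    and entries: "\<forall>i<n. \<forall>j<n. H i j \<in> {1, a, - cnj a}"
    and "i < n" "j < n" "i \<noteq> j"
  defines "X \<equiv> \<lambda>i k. entry_symbol a (H i k)"
  shows "(\<Sum>x<3. \<Sum>y<3. real (pair_count n X i j x y) * re_weight (Re a) x y) = 0"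
    and "Im a * (\<Sum>x<3. \<Sum>y<3. real (pair_count n X i j x y) * im_weight (Re a) x y) = 0"
proof -
  have symbols: "\<forall>k<n. X i k < 3 \<and> X j k < 3"
    by (simp add: X_def entry_symbol_less_3)
  have "(\<Sum>k<n. Complex (re_weight (Re a) (X i k) (X j k)) (Im a * im_weight (Re a) (X i k) (X j k)))
      = (\<Sum>k<n. H i k * cnj (H j k))"
    using assms(1) entries \<open>i < n\<close> \<open>j < n\<close>
    by (intro sum.cong refl)
      (simp add: X_def entry_symbol_less_3 symbol_value_mult_cnj [symmetric] symbol_value_entry_symbol)
  also have "\<dots> = 0"
    using H \<open>i < n\<close> \<open>j < n\<close> \<open>i \<noteq> j\<close> by (simp add: complex_hadamard_def)
  finally have "(\<Sum>k<n. re_weight (Re a) (X i k) (X j k)) = 0"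
    and "Im a * (\<Sum>k<n. im_weight (Re a) (X i k) (X j k)) = 0"
    by (simp_all add: complex_eq_iff sum_distrib_left)
  then show "(\<Sum>x<3. \<Sum>y<3. real (pair_count n X i j x y) * re_weight (Re a) x y) = 0"
    and "Im a * (\<Sum>x<3. \<Sum>y<3. real (pair_count n X i j x y) * im_weight (Re a) x y) = 0"
    using symbols by (simp_all add: sum_pair_weight_by_counts)
qed

text \<open>For c = sqrt 3 / 2 and for c = (sqrt 17 - 1) / 4 the irrationality of c splits the real
  relation of two distinct rows into rational identities among the counts; these two weights are
  combinations of them.\<close>

definition weight_sqrt3 :: "nat \<Rightarrow> nat \<Rightarrow> real" where
  "weight_sqrt3 x y = (if x = y then 2 else if x \<noteq> 0 \<and> y \<noteq> 0 then -1 else 0)"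

definition weight_sqrt17 :: "nat \<Rightarrow> nat \<Rightarrow> real" where
  "weight_sqrt17 x y =
     (if x = y then 2 else if x \<noteq> 0 \<and> y \<noteq> 0 then -1 else if x + y = 1 then 1 else -1)"

definition coincidence_weight :: "nat \<Rightarrow> nat \<Rightarrow> real" where
  "coincidence_weight x y = (if x = y then 1 else 0)"

lemma column_bound_re_weight:
  assumes "\<bar>c\<bar> < 2/3" "(\<Sum>x<3. u x) = 6"
  shows "6 < (\<Sum>x<3. \<Sum>y<3. real (u x) * real (u y) * re_weight c x y)"
proof -
  have "c^2 < (2/3)^2"
    using assms(1) by (metis abs_ge_zero power2_abs power_strict_mono zero_less_numeral)
  moreover have "- 2/3 < c" "c < 2/3" using assms(1) by auto
  moreover have "(\<Sum>x<3. \<Sum>y<3. real (u x) * real (u y) * re_weight c x y)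
      = real (u 0)^2 + real (u 1)^2 + real (u 2)^2 + 2 * c * real (u 0) * (real (u 1) - real (u 2))
        + 2 * (1 - 2 * c^2) * real (u 1) * real (u 2)"
    by (simp add: sum_lessThan_3 re_weight_def power2_eq_square algebra_simps)
  moreover have "u 0 + u 1 + u 2 = 6" using assms(2) by (simp add: sum_lessThan_3)
  ultimately show ?thesis
    by (auto dest!: nat_sum_eq_6_cases simp: power2_eq_square)
qed

lemma column_bound_sqrt3:
  assumes "(\<Sum>x<3. u x) = 6"
  shows "12 < (\<Sum>x<3. \<Sum>y<3. real (u x) * real (u y) * weight_sqrt3 x y)"
proof -
  have "(\<Sum>x<3. \<Sum>y<3. real (u x) * real (u y) * weight_sqrt3 x y)
      = 2 * (real (u 0)^2 + real (u 1)^2 + real (u 2)^2) - 2 * real (u 1) * real (u 2)"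
    by (simp add: sum_lessThan_3 weight_sqrt3_def power2_eq_square)
  moreover have "u 0 + u 1 + u 2 = 6" using assms by (simp add: sum_lessThan_3)
  ultimately show ?thesis by (auto dest!: nat_sum_eq_6_cases)
qed

lemma column_bound_sqrt17:
  assumes "(\<Sum>x<3. u x) = 6"
  shows "12 < (\<Sum>x<3. \<Sum>y<3. real (u x) * real (u y) * weight_sqrt17 x y)"
proof -
  have "(\<Sum>x<3. \<Sum>y<3. real (u x) * real (u y) * weight_sqrt17 x y)
      = 2 * (real (u 0)^2 + real (u 1)^2 + real (u 2)^2) - 2 * real (u 1) * real (u 2)
        + 2 * real (u 0) * (real (u 1) - real (u 2))"
    by (simp add: sum_lessThan_3 weight_sqrt17_def power2_eq_square algebra_simps)
  moreover have "u 0 + u 1 + u 2 = 6" using assms by (simp add: sum_lessThan_3)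
  ultimately show ?thesis by (auto dest!: nat_sum_eq_6_cases)
qed

lemma column_bound_coincidence:
  assumes "(\<Sum>x<3. u x) = 6"
  shows "11 < (\<Sum>x<3. \<Sum>y<3. real (u x) * real (u y) * coincidence_weight x y)"
proof -
  have "(\<Sum>x<3. \<Sum>y<3. real (u x) * real (u y) * coincidence_weight x y)
      = real (u 0)^2 + real (u 1)^2 + real (u 2)^2"
    by (simp add: sum_lessThan_3 coincidence_weight_def power2_eq_square)
  moreover have "u 0 + u 1 + u 2 = 6" using assms by (simp add: sum_lessThan_3)
  ultimately show ?thesis by (auto dest!: nat_sum_eq_6_cases)
qed

lemma pair_weight_sqrt3_eq_0:
  fixes N :: "nat \<Rightarrow> nat \<Rightarrow> nat" and c :: real
  assumes c: "4 * c^2 = 3" and re: "(\<Sum>x<3. \<Sum>y<3. real (N x y) * re_weight c x y) = 0"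
  shows "(\<Sum>x<3. \<Sum>y<3. real (N x y) * weight_sqrt3 x y) = 0"
proof -
  define D U S :: int where "D = N 0 0 + N 1 1 + N 2 2" and "U = N 1 2 + N 2 1"
    and "S = int (N 0 1) + N 1 0 - N 0 2 - N 2 0"
  have c2: "c^2 = 3/4" using c by simp
  have R: "of_int D + c * of_int S - of_int U / 2 = 0"
    using re by (simp add: sum_lessThan_3 re_weight_def D_def U_def S_def c2 algebra_simps)
  then have "of_int (U - 2 * D) = 2 * c * of_int S"
    by (simp add: algebra_simps)
  then have "(of_int (U - 2 * D))^2 = 4 * c^2 * (of_int S)^2"
    by (simp add: power_mult_distrib)
  then have "real_of_int ((U - 2 * D)^2) = real_of_int (3 * S^2)"
    using c by simp
  then have "(U - 2 * D)^2 = 3 * S^2"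
    by (simp only: of_int_eq_iff)
  then have "S = 0"
    using square_eq_prime_times_square[of 3 "U - 2 * D" S] by simp
  then have "U = 2 * D"
    using R by simp
  then show ?thesis
    by (simp add: sum_lessThan_3 weight_sqrt3_def D_def U_def)
qed

lemma pair_weight_sqrt17_eq_0:
  fixes N :: "nat \<Rightarrow> nat \<Rightarrow> nat" and c :: real
  assumes c: "2 * c^2 + c = 2" and re: "(\<Sum>x<3. \<Sum>y<3. real (N x y) * re_weight c x y) = 0"
  shows "(\<Sum>x<3. \<Sum>y<3. real (N x y) * weight_sqrt17 x y) = 0"
proof -
  define D U S :: int where "D = N 0 0 + N 1 1 + N 2 2" and "U = N 1 2 + N 2 1"
    and "S = int (N 0 1) + N 1 0 - N 0 2 - N 2 0"
  have c2: "c^2 = 1 - c/2" using c by simp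
  have R: "of_int (U - D) = c * of_int (S + U)"
    using re by (simp add: sum_lessThan_3 re_weight_def D_def U_def S_def c2 algebra_simps)
  then have "of_int (4 * (U - D) + (S + U)) = (4 * c + 1) * of_int (S + U)"
    by (simp add: algebra_simps)
  then have "(of_int (4 * (U - D) + (S + U)))^2 = (4 * c + 1)^2 * (of_int (S + U))^2"
    by (simp only: power_mult_distrib)
  also have "(4 * c + 1)^2 = 8 * (2 * c^2 + c) + 1"
    by (simp add: power2_eq_square algebra_simps)
  finally have "real_of_int ((4 * (U - D) + (S + U))^2) = real_of_int (17 * (S + U)^2)"
    using c by simp
  then have "(4 * (U - D) + (S + U))^2 = 17 * (S + U)^2"
    by (simp only: of_int_eq_iff)
  then have "S + U = 0"
    using square_eq_prime_times_square[of 17 "4 * (U - D) + (S + U)" "S + U"] by simp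
  moreover from this have "U = D"
    using R by simp
  ultimately show ?thesis
    by (simp add: sum_lessThan_3 weight_sqrt17_def D_def U_def S_def algebra_simps)
qed

lemma int_eq_2c_mult_eq_0:
  fixes d e :: int and c :: real
  assumes "2/3 \<le> c" "c < 1" "of_int e = 2 * c * of_int d" "\<bar>d\<bar> + \<bar>e\<bar> \<le> 4"
  shows "d = 0"
proof (rule ccontr)
  assume "d \<noteq> 0"
  have e: "of_int \<bar>e\<bar> = 2 * c * of_int \<bar>d\<bar>"
    using assms(1,3) by (simp add: abs_mult)
  have "0 \<le> (6 * c - 4) * of_int \<bar>d\<bar>"
    using assms(1) by simp
  then have "4 * of_int \<bar>d\<bar> \<le> real_of_int (3 * \<bar>e\<bar>)"
    using e by (simp add: algebra_simps)
  then have lower: "4 * \<bar>d\<bar> \<le> 3 * \<bar>e\<bar>" by linarith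
  have "0 < (2 - 2 * c) * of_int \<bar>d\<bar>"
    using assms(2) \<open>d \<noteq> 0\<close> by simp
  then have "real_of_int \<bar>e\<bar> < 2 * of_int \<bar>d\<bar>"
    using e by (simp add: algebra_simps)
  then have upper: "\<bar>e\<bar> < 2 * \<bar>d\<bar>" by linarith
  show False
    using lower upper assms(4) \<open>d \<noteq> 0\<close> by (cases "\<bar>d\<bar> = 1") linarith+
qed

text \<open>The situation of two rows with n12 = n21 = u, n10 + n20 = n01 + n02 = h and D coinciding
  positions, where S is the coefficient of c in the real relation.\<close>

lemma balanced_pair_coincidences_lt_2:
  fixes D u h :: nat and S :: int and c :: real
  assumes "D + 2 * u + 2 * h = 6" "\<bar>S\<bar> \<le> 2 * int h" "even S"
    and "real D + c * S + (1 - 2 * c^2) * (2 * u) = 0"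
    and "2/3 \<le> c" "c < 1" "4 * c^2 \<noteq> 3" "2 * c^2 + c \<noteq> 2"
  shows "D < 2"
proof (rule ccontr)
  assume "\<not> D < 2"
  have "c^2 < 1"
    using assms(5,6) by (simp add: abs_square_less_1)
  have "(D = 2 \<and> u = 2 \<and> h = 0 \<and> S = 0)
      \<or> (D = 2 \<and> u = 1 \<and> h = 1 \<and> (S = -2 \<or> S = 0 \<or> S = 2))
      \<or> (D = 2 \<and> u = 0 \<and> h = 2 \<and> (S = -4 \<or> S = -2 \<or> S = 0 \<or> S = 2 \<or> S = 4))
      \<or> (D = 4 \<and> u = 1 \<and> h = 0 \<and> S = 0)
      \<or> (D = 4 \<and> u = 0 \<and> h = 1 \<and> (S = -2 \<or> S = 0 \<or> S = 2))
      \<or> (D = 6 \<and> u = 0 \<and> h = 0 \<and> S = 0)"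
    using assms(1-3) \<open>\<not> D < 2\<close> by presburger
  then show False
    by (elim disjE conjE) (use assms(4-8) \<open>c^2 < 1\<close> in \<open>simp_all add: algebra_simps\<close>)
qed

lemma pair_coincidences_lt_2:
  fixes n00 n01 n02 n10 n11 n12 n20 n21 n22 :: nat and c :: real
  assumes c: "2/3 \<le> c" "c < 1" "4 * c^2 \<noteq> 3" "2 * c^2 + c \<noteq> 2"
    and total: "n00 + n01 + n02 + n10 + n11 + n12 + n20 + n21 + n22 = 6"
    and re: "real n00 + n11 + n22 + c * (real n01 + n10 - n02 - n20)
      + (1 - 2 * c^2) * (real n12 + n21) = 0"
    and im: "real n10 + n20 - n01 - n02 = 2 * c * (real n12 - n21)"
  shows "n00 + n11 + n22 < 2"
proof (rule ccontr)
  assume many: "\<not> n00 + n11 + n22 < 2"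
  define d e :: int where "d = int n12 - int n21" and "e = int n10 + int n20 - int n01 - int n02"
  have "\<bar>d\<bar> + \<bar>e\<bar> \<le> 4"
    using total many unfolding d_def e_def by linarith
  moreover have e: "of_int e = 2 * c * of_int d"
    using im by (simp add: d_def e_def)
  ultimately have "d = 0"
    by (rule int_eq_2c_mult_eq_0[OF c(1,2), rotated])
  with e have "e = 0" by simp
  define h where "h = n10 + n20"
  have u: "n21 = n12" and h: "n01 + n02 = h" "n10 + n20 = h"
    using \<open>d = 0\<close> \<open>e = 0\<close> unfolding d_def e_def h_def by linarith+
  define S :: int where "S = int n01 + int n10 - int n02 - int n20"
  have "n00 + n11 + n22 + 2 * n12 + 2 * h = 6"
    using total u h by linarith
  moreover have "\<bar>S\<bar> \<le> 2 * int h" and "S = 2 * int n10 - 2 * int n02"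
    using h unfolding S_def abs_le_iff by linarith+
  then have "\<bar>S\<bar> \<le> 2 * int h" and "even S" by simp_all
  moreover have "real (n00 + n11 + n22) + c * S + (1 - 2 * c^2) * (2 * n12) = 0"
    using re u by (simp add: S_def)
  ultimately have "n00 + n11 + n22 < 2"
    using balanced_pair_coincidences_lt_2 c by blast
  with many show False ..
qed

lemma pair_coincidences_le_1:
  fixes N :: "nat \<Rightarrow> nat \<Rightarrow> nat" and c :: real
  assumes c: "2/3 \<le> c" "c < 1" "4 * c^2 \<noteq> 3" "2 * c^2 + c \<noteq> 2"
    and total: "(\<Sum>x<3. \<Sum>y<3. N x y) = 6"
    and re: "(\<Sum>x<3. \<Sum>y<3. real (N x y) * re_weight c x y) = 0"
    and im: "(\<Sum>x<3. \<Sum>y<3. real (N x y) * im_weight c x y) = 0"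
  shows "(\<Sum>x<3. \<Sum>y<3. real (N x y) * coincidence_weight x y) \<le> 1"
proof -
  have "N 0 0 + N 1 1 + N 2 2 < 2"
  proof (rule pair_coincidences_lt_2[OF c])
    show "N 0 0 + N 0 1 + N 0 2 + N 1 0 + N 1 1 + N 1 2 + N 2 0 + N 2 1 + N 2 2 = 6"
      using total by (simp add: sum_lessThan_3 add.assoc)
    show "real (N 0 0) + N 1 1 + N 2 2 + c * (real (N 0 1) + N 1 0 - N 0 2 - N 2 0)
        + (1 - 2 * c^2) * (real (N 1 2) + N 2 1) = 0"
      using re by (simp add: sum_lessThan_3 re_weight_def algebra_simps)
    show "real (N 1 0) + N 2 0 - N 0 1 - N 0 2 = 2 * c * (real (N 1 2) - N 2 1)"
      using im by (simp add: sum_lessThan_3 im_weight_def algebra_simps)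
  qed
  then show ?thesis
    by (simp add: sum_lessThan_3 coincidence_weight_def)
qed

lemma no_hadamard_small_Re:
  assumes a: "cmod a = 1" and c: "\<bar>Re a\<bar> < 2/3"
    and H: "complex_hadamard 6 H" and entries: "\<forall>i<6. \<forall>j<6. H i j \<in> {1, a, - cnj a}"
  shows False
proof -
  define X where "X = (\<lambda>i k. entry_symbol a (H i k))"
  have symbols: "\<forall>i<6. \<forall>k<6. X i k < 3"
    by (simp add: X_def entry_symbol_less_3)
  show False
  proof (rule weighted_double_counting[of 6 X 3 "re_weight (Re a)" 1 0])
    show "\<forall>i<6. \<forall>j<6. i \<noteq> j \<longrightarrow>
        (\<Sum>x<3. \<Sum>y<3. real (pair_count 6 X i j x y) * re_weight (Re a) x y) \<le> 0"
      using hadamard_pair_count_relations(1)[OF a H entries] unfolding X_def by simp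
    show "\<forall>k<6. real 6 * 1 + (real 6 - 1) * 0 < (\<Sum>x<3. \<Sum>y<3.
        real (column_count 6 X k x) * real (column_count 6 X k y) * re_weight (Re a) x y)"
      using column_bound_re_weight[OF c] sum_column_counts symbols by simp
  qed (use symbols in \<open>simp_all add: re_weight_def\<close>)
qed

lemma no_hadamard_large_Re:
  assumes a: "cmod a = 1" and c: "2/3 \<le> Re a" "Re a < 1"
    and H: "complex_hadamard 6 H" and entries: "\<forall>i<6. \<forall>j<6. H i j \<in> {1, a, - cnj a}"
  shows False
proof -
  define X where "X = (\<lambda>i k. entry_symbol a (H i k))"
  have symbols: "\<forall>i<6. \<forall>k<6. X i k < 3"
    by (simp add: X_def entry_symbol_less_3)
  have "Im a \<noteq> 0"
  proof
    assume "Im a = 0"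
    then have "\<bar>Re a\<bar> = 1" using a by (simp add: cmod_def)
    then show False using c by simp
  qed
  then have re: "(\<Sum>x<3. \<Sum>y<3. real (pair_count 6 X i j x y) * re_weight (Re a) x y) = 0"
    and im: "(\<Sum>x<3. \<Sum>y<3. real (pair_count 6 X i j x y) * im_weight (Re a) x y) = 0"
    if "i < 6" "j < 6" "i \<noteq> j" for i j
    using hadamard_pair_count_relations[OF a H entries that] unfolding X_def by simp_all
  have total: "(\<Sum>x<3. \<Sum>y<3. pair_count 6 X i j x y) = 6" if "i < 6" "j < 6" for i j
    using that symbols by (simp add: sum_pair_counts)
  have columns: "(\<Sum>x<3. column_count 6 X k x) = 6" if "k < 6" for k
    using that symbols by (simp add: sum_column_counts)
  consider "4 * (Re a)^2 = 3" | "2 * (Re a)^2 + Re a = 2" | "4 * (Re a)^2 \<noteq> 3" "2 * (Re a)^2 + Re a \<noteq> 2"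
    by blast
  then show False
  proof cases
    case 1
    show False
      by (rule weighted_double_counting[of 6 X 3 weight_sqrt3 2 0])
        (use symbols re pair_weight_sqrt3_eq_0[OF 1] column_bound_sqrt3 columns in \<open>auto simp: weight_sqrt3_def\<close>)
  next
    case 2
    show False
      by (rule weighted_double_counting[of 6 X 3 weight_sqrt17 2 0])
        (use symbols re pair_weight_sqrt17_eq_0[OF 2] column_bound_sqrt17 columns in \<open>auto simp: weight_sqrt17_def\<close>)
  next
    case 3
    show False
      by (rule weighted_double_counting[of 6 X 3 coincidence_weight 1 1])
        (use symbols total re im pair_coincidences_le_1[OF c 3] column_bound_coincidence columns
          in \<open>auto simp: coincidence_weight_def\<close>)
  qed
qed

lemma four_dvd_order_of_real_hadamard:
  assumes H: "complex_hadamard n H" and entries: "\<forall>i<n. \<forall>j<n. H i j \<in> {1, -1}" and "3 \<le> n"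
  shows "4 dvd n"
proof -
  have orth: "(\<Sum>k<n. H i k * cnj (H j k)) = (if i = j then of_nat n else 0)" if "i < n" "j < n" for i j
    using H that by (simp add: complex_hadamard_def)
  define f where "f k = (H 0 k + H 1 k) * (cnj (H 0 k) + cnj (H 2 k))" for k
  have "(\<Sum>k<n. f k) = (\<Sum>k<n. H 0 k * cnj (H 0 k)) + (\<Sum>k<n. H 0 k * cnj (H 2 k))
      + (\<Sum>k<n. H 1 k * cnj (H 0 k)) + (\<Sum>k<n. H 1 k * cnj (H 2 k))"
    by (simp add: f_def sum.distrib algebra_simps)
  also have "\<dots> = of_nat n"
    using orth[of 0 0] orth[of 0 2] orth[of 1 0] orth[of 1 2] \<open>3 \<le> n\<close> by simp
  finally have sum_f: "(\<Sum>k<n. f k) = of_nat n" .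
  have f_values: "f k = 0 \<or> f k = 4" if "k < n" for k
  proof -
    have "H 0 k \<in> {1, -1}" "H 1 k \<in> {1, -1}" "H 2 k \<in> {1, -1}"
      using entries that \<open>3 \<le> n\<close> by auto
    then show ?thesis by (auto simp: f_def)
  qed
  have "(\<Sum>k<n. f k) = (\<Sum>k<n. if f k \<noteq> 0 then 4 else 0)"
    using f_values by (intro sum.cong) auto
  also have "\<dots> = (\<Sum>k\<in>{k\<in>{..<n}. f k \<noteq> 0}. 4)"
    by (rule sum.inter_filter [symmetric]) simp
  finally have "of_nat n = (of_nat (4 * card {k\<in>{..<n}. f k \<noteq> 0}) :: complex)"
    using sum_f by simp
  then show ?thesis
    by (metis dvd_triv_left of_nat_eq_iff)
qed

theorem mainTheorem10:
  fixes a :: complex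
  assumes "cmod a = 1"
  shows "\<not> (\<exists>H. complex_hadamard 6 H \<and>
                (\<forall>i<6. \<forall>j<6. H i j \<in> {1, a, - cnj a}))"
proof
  assume "\<exists>H. complex_hadamard 6 H \<and> (\<forall>i<6. \<forall>j<6. H i j \<in> {1, a, - cnj a})"
  then obtain H where H: "complex_hadamard 6 H" and entries: "\<forall>i<6. \<forall>j<6. H i j \<in> {1, a, - cnj a}"
    by blast
  have "\<bar>Re a\<bar> \<le> 1"
    using abs_Re_le_cmod[of a] assms by simp
  then consider "\<bar>Re a\<bar> < 2/3" | "2/3 \<le> Re a" "Re a < 1" | "2/3 \<le> Re (- cnj a)" "Re (- cnj a) < 1"
    | "\<bar>Re a\<bar> = 1"
    by fastforce
  then show False
  proof cases
    case 1
    then show False using no_hadamard_small_Re[OF assms _ H entries] by simp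
  next
    case 2
    then show False using no_hadamard_large_Re[OF assms _ _ H entries] by simp
  next
    case 3
    have "{1, - cnj a, - cnj (- cnj a)} = {1, a, - cnj a}" by auto
    then show False
      using no_hadamard_large_Re[of "- cnj a" H] 3 assms H entries by simp
  next
    case 4
    then have "(Re a)^2 = 1" by (metis power2_abs one_power2)
    then have "Im a = 0" using assms by (simp add: cmod_def)
    then have "a = 1 \<or> a = -1" using 4 by (auto simp: complex_eq_iff abs_if split: if_splits)
    then have "{1, a, - cnj a} = {1, -1}" by auto
    then have "\<forall>i<6. \<forall>j<6. H i j \<in> {1, -1}" using entries by simp
    then have "4 dvd (6::nat)" using four_dvd_order_of_real_hadamard[OF H] by simp
    then show False by simp
  qed
qed
end
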